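(* Let $n\ge 0$, let $T$ be a triangulation of a regular polygon with $n+3$ vertices, let $\alpha,\alpha'$ be positive roots and write $S=\operatorname{Supp}\alpha$, $S'=\operatorname{Supp}\alpha'$. The following are equivalent: (A) there exists $i\in S\cap S'$ such that, denoting by $v_1,v_2$ the endpoints of $-\alpha_i$ and by $u_1,u_2$ (resp. $u_1',u_2'$) the endpoints of $\alpha$ (resp. $\alpha'$), and ordering the vertices counterclockwise starting at $v_1$ (for a suitable choice of labelling of the endpoints), one has $v_1<u_1\le u_1'<v_2<u_2\le u_2'$; (B) $S\cap S'\neq\emptyset$, there is no arrow in ${Q}_T$ from $S\setminus S'$ to $S\cap S'$, and there is no arrow in ${Q}_T$ from $S\cap S'$ to $S'\setminus S$.
   Context: Diagonals of the polygon are called roots; those in $T$ are negative roots, indexed by a set $I$ (the one indexed by $i$ written $-\alpha_i$), and the others positive roots. $\operatorname{Supp}\alpha$ is the set of $i\in I$ with $-\alpha_i$ crossing $\alpha$. If $-\alpha_i,-\alpha_j$ bound a common triangle of $T$ with common vertex $x$, set $-\alpha_i<-\alpha_j$ if the minimal-angle rotation about $x$ sending the line through $-\alpha_i$ to that through $-\alpha_j$ is counterclockwise. ${Q}_T$ has vertex set $I$ and an arrow $j\to i$ whenever $-\alpha_i,-\alpha_j$ bound a common triangle and $-\alpha_i<-\alpha_j$. *)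

theory Defs
  imports Main
begin

text \<open>Vertices of the (convex, regular) polygon with N vertices are 0,...,N-1,
 labelled counterclockwise. A diagonal (root) is a 2-element set of non-adjacent vertices.\<close>

definition adjacent :: "nat \<Rightarrow> nat \<Rightarrow> nat \<Rightarrow> bool" where
  "adjacent N a b \<longleftrightarrow> (a + 1) mod N = b \<or> (b + 1) mod N = a"

definition is_diag :: "nat \<Rightarrow> nat set \<Rightarrow> bool" where
  "is_diag N d \<longleftrightarrow> (\<exists>a b. d = {a, b} \<and> a < b \<and> b < N \<and> \<not> adjacent N a b)"

definition is_side :: "nat \<Rightarrow> nat set \<Rightarrow> bool" where
  "is_side N d \<longleftrightarrow> (\<exists>a b. d = {a, b} \<and> a < N \<and> b < N \<and> a \<noteq> b \<and> adjacent N a b)"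

definition crosses :: "nat set \<Rightarrow> nat set \<Rightarrow> bool" where
  "crosses d e \<longleftrightarrow> (\<exists>a b c c'. d = {a, b} \<and> e = {c, c'} \<and> a < c \<and> c < b \<and> (c' < a \<or> b < c'))"

definition triangulation :: "nat \<Rightarrow> nat set set \<Rightarrow> bool" where
  "triangulation N T \<longleftrightarrow> T \<subseteq> {d. is_diag N d} \<and> (\<forall>d\<in>T. \<forall>e\<in>T. \<not> crosses d e)
     \<and> (\<forall>d. is_diag N d \<and> d \<notin> T \<longrightarrow> (\<exists>e\<in>T. crosses d e))"

definition positive_root :: "nat \<Rightarrow> nat set set \<Rightarrow> nat set \<Rightarrow> bool" where
  "positive_root N T \<alpha> \<longleftrightarrow> is_diag N \<alpha> \<and> \<alpha> \<notin> T"

text \<open>Negative roots are the diagonals in T; we index them by themselves (I = T).\<close>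
definition Supp :: "nat set set \<Rightarrow> nat set \<Rightarrow> nat set set" where
  "Supp T \<alpha> = {d \<in> T. crosses d \<alpha>}"

definition triangle_of :: "nat \<Rightarrow> nat set set \<Rightarrow> nat \<Rightarrow> nat \<Rightarrow> nat \<Rightarrow> bool" where
  "triangle_of N T x a b \<longleftrightarrow> x < N \<and> a < N \<and> b < N \<and> x \<noteq> a \<and> x \<noteq> b \<and> a \<noteq> b
     \<and> ({x, a} \<in> T \<or> is_side N {x, a}) \<and> ({x, b} \<in> T \<or> is_side N {x, b})
     \<and> ({a, b} \<in> T \<or> is_side N {a, b})"

definition ccw_pos :: "nat \<Rightarrow> nat \<Rightarrow> nat \<Rightarrow> nat" where
  "ccw_pos N v w = (w + N - v) mod N"

text \<open>root_less N T di dj: di, dj bound a common triangle with common vertex x, and the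
 counterclockwise rotation about x through the triangle's angle (< pi) sends the ray to the
 other endpoint of di onto the ray to the other endpoint of dj.\<close>
definition root_less :: "nat \<Rightarrow> nat set set \<Rightarrow> nat set \<Rightarrow> nat set \<Rightarrow> bool" where
  "root_less N T di dj \<longleftrightarrow> (\<exists>x a b. di = {x, a} \<and> dj = {x, b} \<and> triangle_of N T x a b
      \<and> ccw_pos N x a < ccw_pos N x b)"

text \<open>Arrow j \<rightarrow> i in Q_T.\<close>
definition arrow :: "nat \<Rightarrow> nat set set \<Rightarrow> nat set \<Rightarrow> nat set \<Rightarrow> bool" where
  "arrow N T j i \<longleftrightarrow> i \<in> T \<and> j \<in> T \<and> root_less N T i j"

end

theory Submission
  imports Defs
begin

text \<open>Everything reduces to the cyclic order of the vertices: two diagonals cross iff each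
  separates the endpoints of the other, and an arrow \<open>j \<rightarrow> i\<close> is a counterclockwise triangle
  \<open>x a b\<close> of \<open>T\<close> with \<open>i = {x, a}\<close> and \<open>j = {x, b}\<close>.

  If (A) holds for a common negative root \<open>{v1, v2}\<close>, the triangle of an arrow lies on one side
  of it, and there the endpoints of \<open>\<alpha>'\<close> weakly following those of \<open>\<alpha>\<close> force \<open>{x, a}\<close> to
  cross \<open>\<alpha>\<close> exactly when \<open>{x, b}\<close> crosses \<open>\<alpha>'\<close>; both kinds of arrow excluded by (B) violate
  this.

  If (A) fails for a common negative root \<open>{w1, w2}\<close>, then on one side \<open>\<alpha>'\<close> enters the arc
  from \<open>w1\<close> to \<open>w2\<close> strictly before \<open>\<alpha>\<close>. The triangle of \<open>T\<close> on that side has apex \<open>z\<close> on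
  the arc; according to the position of \<open>z\<close> relative to the endpoints of \<open>\<alpha>'\<close> and \<open>\<alpha>\<close>, one
  of its sides \<open>{w1, z}\<close>, \<open>{z, w2}\<close> carries an arrow excluded by (B), or it is a diagonal with
  a shorter arc in the same configuration. Induction on the length of the arc concludes.\<close>

section \<open>Cyclic order of the vertices\<close>

definition ccw_order :: "nat \<Rightarrow> nat \<Rightarrow> nat \<Rightarrow> bool" where
  "ccw_order x y z \<longleftrightarrow> x < y \<and> y < z \<or> y < z \<and> z < x \<or> z < x \<and> x < y"

lemmas nat_order_as_int = of_nat_less_iff[where 'a = int, symmetric] of_nat_eq_iff[where 'a = int, symmetric]

lemma ccw_order_rotate: "ccw_order x y z \<longleftrightarrow> ccw_order y z x"
  unfolding ccw_order_def by auto

lemma ccw_order_distinct: "ccw_order x y z \<Longrightarrow> x \<noteq> y \<and> y \<noteq> z \<and> x \<noteq> z"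
  unfolding ccw_order_def by auto

lemma ccw_order_narrow:
  assumes "ccw_order x y z" "ccw_order y w z"
  shows "ccw_order x y w" "ccw_order x w z"
  using assms unfolding ccw_order_def by (simp_all only: nat_order_as_int) (smt (z3))+

lemma ccw_pos_self [simp]: "ccw_pos N v v = 0"
  unfolding ccw_pos_def by simp

lemma ccw_pos_less_modulus: "0 < N \<Longrightarrow> ccw_pos N v w < N"
  unfolding ccw_pos_def by simp

lemma ccw_pos_eq: "v < N \<Longrightarrow> w < N \<Longrightarrow> ccw_pos N v w = (if v \<le> w then w - v else w + N - v)"
  unfolding ccw_pos_def by (auto simp: mod_if le_mod_geq)

lemma ccw_pos_less_iff:
  assumes "x < N" "a < N" "b < N"
  shows "ccw_pos N x a < ccw_pos N x b \<longleftrightarrow> a \<noteq> b \<and> (a = x \<or> ccw_order x a b)"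
  using assms by (cases "x \<le> a"; cases "x \<le> b") (auto simp: ccw_pos_eq ccw_order_def)

lemma ccw_pos_le_iff:
  assumes "x < N" "a < N" "b < N"
  shows "ccw_pos N x a \<le> ccw_pos N x b \<longleftrightarrow> a = b \<or> a = x \<or> ccw_order x a b"
  using assms by (cases "x \<le> a"; cases "x \<le> b") (auto simp: ccw_pos_eq ccw_order_def)

lemma ccw_pos_pos_iff: "x < N \<Longrightarrow> y < N \<Longrightarrow> 0 < ccw_pos N x y \<longleftrightarrow> x \<noteq> y"
  using ccw_pos_less_iff[of x N x y] by auto

lemma ccw_pos_add:
  assumes "x < N" "y < N" "z < N" "ccw_order x y z"
  shows "ccw_pos N x y + ccw_pos N y z = ccw_pos N x z"
  using assms unfolding ccw_order_def by (auto simp: ccw_pos_eq)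

lemma ccw_pos_less_of_ccw_order:
  assumes "x < N" "y < N" "z < N" "ccw_order x y z"
  shows "ccw_pos N x y < ccw_pos N x z" "ccw_pos N y z < ccw_pos N x z"
  using ccw_pos_add[OF assms] ccw_pos_pos_iff[of x N y] ccw_pos_pos_iff[of y N z]
    ccw_order_distinct[OF assms(4)] assms(1-3) by auto

section \<open>Crossing diagonals\<close>

lemma crosses_intro: "a < c \<Longrightarrow> c < b \<Longrightarrow> d < a \<or> b < d \<Longrightarrow> crosses {a, b} {c, d}"
  unfolding crosses_def by blast

lemma crosses_iff_ccw_order:
  "crosses {a, b} {c, d} \<longleftrightarrow> ccw_order a c b \<and> ccw_order b d a \<or> ccw_order a d b \<and> ccw_order b c a"
  (is "_ \<longleftrightarrow> ?R a b c d")
proof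
  have swap: "?R a b c d = ?R b a c d" "?R a b c d = ?R a b d c" for a b c d
    by blast+
  assume "crosses {a, b} {c, d}"
  then obtain a0 b0 c0 d0 where ab: "{a, b} = {a0, b0}" and cd: "{c, d} = {c0, d0}"
    and order: "a0 < c0" "c0 < b0" "d0 < a0 \<or> b0 < d0"
    unfolding crosses_def by blast
  have "?R a0 b0 c0 d0"
    using order unfolding ccw_order_def by auto
  moreover have "?R a b c d = ?R a0 b0 c0 d0"
    using ab cd swap unfolding doubleton_eq_iff by blast
  ultimately show "?R a b c d" by simp
next
  assume "?R a b c d"
  then consider "a < c" "c < b" "d < a \<or> b < d" | "b < c" "c < a" "d < b \<or> a < d"
    | "a < d" "d < b" "c < a \<or> b < c" | "b < d" "d < a" "c < b \<or> a < c"
    unfolding ccw_order_def by (elim disjE conjE) (meson less_trans not_less_iff_gr_or_eq)+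
  then show "crosses {a, b} {c, d}"
    by cases (metis crosses_intro insert_commute)+
qed

lemma crosses_sym: "crosses d e \<Longrightarrow> crosses e d"
proof -
  assume "crosses d e"
  then obtain a b c c' where "d = {a, b}" "e = {c, c'}" "a < c" "c < b" "c' < a \<or> b < c'"
    unfolding crosses_def by blast
  then show "crosses e d"
    using crosses_intro[of c' a c b] crosses_intro[of c b c' a] by (auto simp: insert_commute)
qed

section \<open>Diagonals, sides and triangles of a triangulation\<close>

lemma adjacent_sym: "adjacent N a b \<longleftrightarrow> adjacent N b a"
  unfolding adjacent_def by auto

lemma is_diag_iff: "is_diag N {a, b} \<longleftrightarrow> a < N \<and> b < N \<and> a \<noteq> b \<and> \<not> adjacent N a b"
proof
  assume "is_diag N {a, b}"
  then obtain c d where "{a, b} = {c, d}" "c < d" "d < N" "\<not> adjacent N c d"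
    unfolding is_diag_def by blast
  then show "a < N \<and> b < N \<and> a \<noteq> b \<and> \<not> adjacent N a b"
    unfolding doubleton_eq_iff using adjacent_sym by auto
next
  assume ab: "a < N \<and> b < N \<and> a \<noteq> b \<and> \<not> adjacent N a b"
  show "is_diag N {a, b}"
  proof (cases "a < b")
    case True
    then show ?thesis unfolding is_diag_def using ab by blast
  next
    case False
    then have "b < a" using ab by auto
    then show ?thesis unfolding is_diag_def using ab adjacent_sym[of N a b] by (metis insert_commute)
  qed
qed

lemma side_not_crosses:
  assumes "is_side N s" "c < N" "d < N"
  shows "\<not> crosses s {c, d}"
proof -
  obtain a b where "s = {a, b}" "a < N" "b < N" "(a + 1) mod N = b \<or> (b + 1) mod N = a"
    using assms(1) unfolding is_side_def adjacent_def by blast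
  then show ?thesis
    using assms(2,3) by (auto simp: crosses_iff_ccw_order ccw_order_def mod_if split: if_splits)
qed

definition edge_of :: "nat \<Rightarrow> nat set set \<Rightarrow> nat set \<Rightarrow> bool" where
  "edge_of N T e \<longleftrightarrow> e \<in> T \<or> is_side N e"

lemma triangle_of_iff:
  "triangle_of N T x a b \<longleftrightarrow> x < N \<and> a < N \<and> b < N \<and> x \<noteq> a \<and> x \<noteq> b \<and> a \<noteq> b \<and>
     edge_of N T {x, a} \<and> edge_of N T {x, b} \<and> edge_of N T {a, b}"
  unfolding triangle_of_def edge_of_def ..

lemma triangulation_diagonal:
  assumes "triangulation N T" "{a, b} \<in> T"
  shows "a < N" "b < N" "a \<noteq> b" "\<not> adjacent N a b"
  using assms is_diag_iff[of N a b] unfolding triangulation_def by blast+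

lemma triangulation_memE:
  assumes "triangulation N T" "d \<in> T"
  obtains a b where "d = {a, b}" "a < N" "b < N"
  using assms unfolding triangulation_def is_diag_def by auto

lemma edge_of_not_crosses:
  assumes tr: "triangulation N T" and "d \<in> T" "edge_of N T {p, q}" "p < N" "q < N"
  shows "\<not> crosses d {p, q}"
proof
  assume cr: "crosses d {p, q}"
  obtain c1 c2 where d: "d = {c1, c2}" "c1 < N" "c2 < N"
    using triangulation_memE[OF tr \<open>d \<in> T\<close>] .
  show False
    using \<open>edge_of N T {p, q}\<close> unfolding edge_of_def
  proof
    assume "{p, q} \<in> T"
    then show False using tr \<open>d \<in> T\<close> cr unfolding triangulation_def by blast
  next
    assume "is_side N {p, q}"
    then show False using side_not_crosses d crosses_sym[OF cr] by blast
  qed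
qed

lemma crossing_edge_in_triangulation:
  assumes "edge_of N T e" "crosses e {c, d}" "c < N" "d < N"
  shows "e \<in> T"
  using assms side_not_crosses unfolding edge_of_def by blast

lemma crosses_one_side_of_triangle:
  assumes "ccw_order w1 z w2" "crosses {z, w2} {c1, c2}"
    and "\<not> crosses {w1, w2} {c1, c2}" "\<not> crosses {w1, z} {c1, c2}"
  shows "c1 = w1 \<and> ccw_order z c2 w2 \<or> c2 = w1 \<and> ccw_order z c1 w2"
  using assms unfolding crosses_iff_ccw_order ccw_order_def
  by (simp only: nat_order_as_int) (smt (z3))

lemma diagonal_successor_edge:
  assumes tr: "triangulation N T" and w: "{w1, w2} \<in> T"
  shows "\<exists>z<N. ccw_order w1 z w2 \<and> edge_of N T {w1, z}"
proof -
  note w_props = triangulation_diagonal[OF tr w]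
  define succ where "succ = (w1 + 1) mod N"
  have "succ < N" "succ \<noteq> w1" "adjacent N w1 succ"
    using w_props unfolding succ_def adjacent_def by (auto simp: mod_if)
  then have "is_side N {w1, succ}"
    unfolding is_side_def using w_props by blast
  moreover have "ccw_order w1 succ w2"
    using w_props unfolding succ_def ccw_order_def adjacent_def by (auto simp: mod_if)
  ultimately show ?thesis
    unfolding edge_of_def using \<open>succ < N\<close> by blast
qed

text \<open>The apex is the vertex of the arc from \<open>w1\<close> to \<open>w2\<close> farthest from \<open>w1\<close> among those
  joined to \<open>w1\<close> by an edge: a diagonal of \<open>T\<close> crossing \<open>{z, w2}\<close> would have to leave \<open>w1\<close>
  and end even farther along the arc.\<close>
lemma diagonal_bounds_triangle:
  assumes tr: "triangulation N T" and w: "{w1, w2} \<in> T"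
  shows "\<exists>z<N. ccw_order w1 z w2 \<and> edge_of N T {w1, z} \<and> edge_of N T {z, w2}"
proof -
  note w_props = triangulation_diagonal[OF tr w]
  define P where "P z \<longleftrightarrow> z < N \<and> ccw_order w1 z w2 \<and> edge_of N T {w1, z}" for z
  obtain z where "P z" and z_max: "\<forall>y. P y \<longrightarrow> ccw_pos N w1 y \<le> ccw_pos N w1 z"
    using ex_has_greatest_nat[of P _ "ccw_pos N w1" N] diagonal_successor_edge[OF tr w]
      ccw_pos_less_modulus w_props unfolding P_def by (metis gr_zeroI not_less0)
  then have z: "z < N" "ccw_order w1 z w2" and left: "edge_of N T {w1, z}"
    unfolding P_def by auto
  have "edge_of N T {z, w2}"
  proof (rule ccontr)
    assume not_edge: "\<not> edge_of N T {z, w2}"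
    have "is_diag N {z, w2}"
      using not_edge z w_props ccw_order_distinct[OF z(2)]
      unfolding is_diag_iff edge_of_def is_side_def by blast
    then obtain e where "e \<in> T" and cr: "crosses {z, w2} e"
      using tr not_edge unfolding triangulation_def edge_of_def by blast
    then obtain c1 c2 where e: "e = {c1, c2}" "c1 < N" "c2 < N"
      using triangulation_memE[OF tr] by blast
    have "\<not> crosses {w1, w2} {c1, c2}"
      using tr w \<open>e \<in> T\<close> e(1) unfolding triangulation_def by blast
    moreover have "\<not> crosses {w1, z} {c1, c2}"
      using edge_of_not_crosses[OF tr \<open>e \<in> T\<close> left w_props(1) z(1)] e(1) crosses_sym by blast
    ultimately obtain c where c: "c < N" "ccw_order z c w2" "{w1, c} = e"
      using crosses_one_side_of_triangle[OF z(2)] cr e by (auto simp: insert_commute)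
    then have "P c"
      unfolding P_def edge_of_def using \<open>e \<in> T\<close> ccw_order_narrow(2)[OF z(2)] by blast
    moreover have "ccw_pos N w1 z < ccw_pos N w1 c"
      using ccw_order_narrow(1)[OF z(2) c(2)] ccw_pos_less_iff[OF w_props(1) z(1) c(1)]
        ccw_order_distinct by blast
    ultimately show False
      using z_max by fastforce
  qed
  then show ?thesis
    using z left by blast
qed

lemma arrow_iff_ccw_triangle:
  "arrow N T j k \<longleftrightarrow> j \<in> T \<and> k \<in> T \<and>
     (\<exists>x a b. k = {x, a} \<and> j = {x, b} \<and> triangle_of N T x a b \<and> ccw_order x a b)"
proof -
  have "ccw_pos N x a < ccw_pos N x b \<longleftrightarrow> ccw_order x a b" if "triangle_of N T x a b" for x a b
    using that ccw_pos_less_iff[of x N a b] ccw_order_distinct unfolding triangle_of_def by blast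
  then show ?thesis
    unfolding arrow_def root_less_def by blast
qed

lemma ccw_triangle_arrows:
  assumes tr: "triangulation N T" and w: "{w1, w2} \<in> T"
    and z: "z < N" "ccw_order w1 z w2" and left: "edge_of N T {w1, z}" and right: "edge_of N T {z, w2}"
  shows "{z, w2} \<in> T \<Longrightarrow> arrow N T {z, w2} {w1, w2}"
    and "{w1, z} \<in> T \<Longrightarrow> arrow N T {w1, w2} {w1, z}"
proof -
  have "edge_of N T {w1, w2}"
    using w unfolding edge_of_def by simp
  then have tri: "triangle_of N T w2 w1 z" "triangle_of N T w1 z w2"
    using triangulation_diagonal[OF tr w] z(1) ccw_order_distinct[OF z(2)] left right
    unfolding triangle_of_iff by (simp_all add: insert_commute)
  have "ccw_order w2 w1 z" "{w2, w1} \<in> T"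
    using z(2) ccw_order_rotate w by (auto simp: insert_commute)
  then show "{z, w2} \<in> T \<Longrightarrow> arrow N T {z, w2} {w1, w2}"
    using tri(1) unfolding arrow_iff_ccw_triangle by (metis insert_commute)
  show "{w1, z} \<in> T \<Longrightarrow> arrow N T {w1, w2} {w1, z}"
    using tri(2) w z(2) unfolding arrow_iff_ccw_triangle by blast
qed

section \<open>Two positive roots crossing a common negative root\<close>

definition overlap_arrow :: "nat \<Rightarrow> nat set set \<Rightarrow> nat set \<Rightarrow> nat set \<Rightarrow> bool" where
  "overlap_arrow N T \<alpha> \<alpha>' \<longleftrightarrow>
     (\<exists>j \<in> Supp T \<alpha> - Supp T \<alpha>'. \<exists>i \<in> Supp T \<alpha> \<inter> Supp T \<alpha>'. arrow N T j i) \<or>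
     (\<exists>j \<in> Supp T \<alpha> \<inter> Supp T \<alpha>'. \<exists>i \<in> Supp T \<alpha>' - Supp T \<alpha>. arrow N T j i)"

text \<open>Condition (A); an abbreviation, so that it is literally the formula of the theorem.\<close>
abbreviation ccw_chain :: "nat \<Rightarrow> nat \<Rightarrow> nat \<Rightarrow> nat \<Rightarrow> nat \<Rightarrow> nat \<Rightarrow> nat \<Rightarrow> bool" where
  "ccw_chain N v1 v2 u1 u2 u1' u2' \<equiv>
     ccw_pos N v1 v1 < ccw_pos N v1 u1 \<and> ccw_pos N v1 u1 \<le> ccw_pos N v1 u1' \<and>
     ccw_pos N v1 u1' < ccw_pos N v1 v2 \<and> ccw_pos N v1 v2 < ccw_pos N v1 u2 \<and>
     ccw_pos N v1 u2 \<le> ccw_pos N v1 u2'"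

definition follows_across :: "nat \<Rightarrow> nat \<Rightarrow> nat \<Rightarrow> nat \<Rightarrow> nat \<Rightarrow> nat \<Rightarrow> bool" where
  "follows_across v1 v2 u1 u2 u1' u2' \<longleftrightarrow> ccw_order v1 u1 v2 \<and> ccw_order v2 u2 v1 \<and>
     (u1' = u1 \<or> ccw_order u1 u1' v2) \<and> (u2' = u2 \<or> ccw_order u2 u2' v1)"

definition precedes_on_arc :: "nat \<Rightarrow> nat \<Rightarrow> nat \<Rightarrow> nat \<Rightarrow> nat \<Rightarrow> nat \<Rightarrow> bool" where
  "precedes_on_arc w1 w2 a b a' b' \<longleftrightarrow>
     ccw_order w1 a' a \<and> ccw_order w1 a w2 \<and> ccw_order w2 b w1 \<and> ccw_order w2 b' w1"

lemma ccw_chain_iff_follows_across: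
  assumes "v1 < N" "v2 < N" "u1 < N" "u2 < N" "u1' < N" "u2' < N"
  shows "ccw_chain N v1 v2 u1 u2 u1' u2' \<longleftrightarrow> follows_across v1 v2 u1 u2 u1' u2'"
  using assms unfolding follows_across_def
  by (simp add: ccw_pos_less_iff ccw_pos_le_iff del: ccw_pos_self)
    (simp only: ccw_order_def nat_order_as_int; smt (z3))

lemma follows_across_triangle_crossings:
  assumes "follows_across v1 v2 u1 u2 u1' u2'" and "ccw_order x a b"
    and "\<not> crosses {v1, v2} {x, a}" "\<not> crosses {v1, v2} {x, b}" "\<not> crosses {v1, v2} {a, b}"
    and "crosses {x, b} {u1, u2}" "crosses {x, a} {u1', u2'}"
  shows "crosses {x, a} {u1, u2} \<longleftrightarrow> crosses {x, b} {u1', u2'}"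
  using assms unfolding crosses_iff_ccw_order follows_across_def ccw_order_def
  by (simp only: nat_order_as_int) (smt (z3))

lemma not_follows_across_imp_precedes_on_arc:
  assumes "ccw_order v1 u1 v2" "ccw_order v2 u2 v1" "ccw_order v1 u1' v2" "ccw_order v2 u2' v1"
    and "\<not> follows_across v1 v2 u1 u2 u1' u2'"
  shows "precedes_on_arc v1 v2 u1 u2 u1' u2' \<or> precedes_on_arc v2 v1 u2 u1 u2' u1'"
  using assms unfolding follows_across_def precedes_on_arc_def ccw_order_def
  by (simp only: nat_order_as_int) (smt (z3))

lemma precedes_on_arc_crosses:
  assumes "precedes_on_arc w1 w2 a b a' b'"
  shows "crosses {w1, w2} {a, b}" "crosses {w1, w2} {a', b'}"
  using assms unfolding precedes_on_arc_def crosses_iff_ccw_order ccw_order_def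
  by (simp_all only: nat_order_as_int) (smt (z3))+

lemma precedes_on_arc_cases:
  assumes "precedes_on_arc w1 w2 a b a' b'" "ccw_order w1 z w2"
  shows "ccw_order w1 z a' \<or> z = a' \<or> ccw_order a' z a \<or> z = a \<or> ccw_order a z w2"
  using assms unfolding precedes_on_arc_def ccw_order_def by (simp only: nat_order_as_int) (smt (z3))

lemma precedes_on_arc_shift_start:
  assumes "precedes_on_arc w1 w2 a b a' b'" "ccw_order w1 z a'"
  shows "precedes_on_arc z w2 a b a' b'"
  using assms unfolding precedes_on_arc_def ccw_order_def by (simp only: nat_order_as_int) (smt (z3))

lemma precedes_on_arc_shift_end:
  assumes "precedes_on_arc w1 w2 a b a' b'" "ccw_order a z w2"
  shows "precedes_on_arc w1 z a b a' b'"
  using assms unfolding precedes_on_arc_def ccw_order_def by (simp only: nat_order_as_int) (smt (z3))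

lemma precedes_on_arc_separating_chord:
  assumes "precedes_on_arc w1 w2 a b a' b'" "z = a' \<or> ccw_order a' z a"
  shows "crosses {z, w2} {a, b}" "\<not> crosses {z, w2} {a', b'}"
  using assms unfolding precedes_on_arc_def crosses_iff_ccw_order ccw_order_def
  by (simp_all only: nat_order_as_int) (smt (z3))+

lemma precedes_on_arc_apex_chord:
  assumes "precedes_on_arc w1 w2 a b a' b'"
  shows "crosses {w1, a} {a', b'}" "\<not> crosses {w1, a} {a, b}"
  using assms unfolding precedes_on_arc_def crosses_iff_ccw_order ccw_order_def
  by (simp_all only: nat_order_as_int) (smt (z3))+

lemma precedes_on_arc_step:
  assumes tr: "triangulation N T" and w: "{w1, w2} \<in> T" and prec: "precedes_on_arc w1 w2 a b a' b'"
    and \<alpha>: "\<alpha> = {a, b}" "is_diag N \<alpha>" and \<alpha>': "\<alpha>' = {a', b'}" "is_diag N \<alpha>'"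
  shows "overlap_arrow N T \<alpha> \<alpha>' \<or>
    (\<exists>v1 v2. {v1, v2} \<in> T \<and> precedes_on_arc v1 v2 a b a' b' \<and> ccw_pos N v1 v2 < ccw_pos N w1 w2)"
proof -
  have ends: "a < N" "b < N" "a' < N" "b' < N"
    using \<alpha> \<alpha>' is_diag_iff by auto
  note w_props = triangulation_diagonal[OF tr w]
  obtain z where z: "z < N" "ccw_order w1 z w2"
    and left: "edge_of N T {w1, z}" and right: "edge_of N T {z, w2}"
    using diagonal_bounds_triangle[OF tr w] by blast
  note shorter = ccw_pos_less_of_ccw_order[OF w_props(1) z(1) w_props(2) z(2)]
  note arrows = ccw_triangle_arrows[OF tr w z left right]
  have common: "{w1, w2} \<in> Supp T \<alpha> \<inter> Supp T \<alpha>'"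
    using precedes_on_arc_crosses[OF prec] w \<alpha> \<alpha>' unfolding Supp_def by simp
  consider (far) "ccw_order w1 z a'" | (middle) "z = a' \<or> ccw_order a' z a"
    | (apex) "z = a" | (near) "ccw_order a z w2"
    using precedes_on_arc_cases[OF prec z(2)] by blast
  then show ?thesis
  proof cases
    case far
    note shifted = precedes_on_arc_shift_start[OF prec far]
    have "{z, w2} \<in> T"
      using crossing_edge_in_triangulation[OF right precedes_on_arc_crosses(1)[OF shifted]] ends by simp
    then show ?thesis
      using shifted shorter(2) by blast
  next
    case middle
    note cr = precedes_on_arc_separating_chord[OF prec middle]
    have "{z, w2} \<in> T"
      using crossing_edge_in_triangulation[OF right cr(1)] ends by simp
    then have "{z, w2} \<in> Supp T \<alpha> - Supp T \<alpha>'" "arrow N T {z, w2} {w1, w2}"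
      using cr \<alpha> \<alpha>' arrows(1) unfolding Supp_def by auto
    then show ?thesis
      using common unfolding overlap_arrow_def by blast
  next
    case apex
    note cr = precedes_on_arc_apex_chord[OF prec]
    have "{w1, z} \<in> T"
      using crossing_edge_in_triangulation[OF left] cr(1) apex ends by simp
    then have "{w1, z} \<in> Supp T \<alpha>' - Supp T \<alpha>" "arrow N T {w1, w2} {w1, z}"
      using cr apex \<alpha> \<alpha>' arrows(2) unfolding Supp_def by auto
    then show ?thesis
      using common unfolding overlap_arrow_def by blast
  next
    case near
    note shifted = precedes_on_arc_shift_end[OF prec near]
    have "{w1, z} \<in> T"
      using crossing_edge_in_triangulation[OF left precedes_on_arc_crosses(1)[OF shifted]] ends by simp
    then show ?thesis
      using shifted shorter(1) by blast
  qed
qed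

lemma precedes_on_arc_imp_overlap_arrow:
  assumes "triangulation N T"
    and "\<alpha> = {a, b}" "is_diag N \<alpha>" "\<alpha>' = {a', b'}" "is_diag N \<alpha>'"
  shows "{w1, w2} \<in> T \<Longrightarrow> precedes_on_arc w1 w2 a b a' b' \<Longrightarrow> overlap_arrow N T \<alpha> \<alpha>'"
proof (induction "ccw_pos N w1 w2" arbitrary: w1 w2 rule: less_induct)
  case less
  then show ?case
    using precedes_on_arc_step[OF assms(1) less.prems assms(2-5)] by blast
qed

lemma follows_across_imp_not_overlap_arrow:
  assumes tr: "triangulation N T" and i: "{v1, v2} \<in> T"
    and \<alpha>: "\<alpha> = {u1, u2}" and \<alpha>': "\<alpha>' = {u1', u2'}"
    and follows: "follows_across v1 v2 u1 u2 u1' u2'"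
  shows "\<not> overlap_arrow N T \<alpha> \<alpha>'"
proof
  assume "overlap_arrow N T \<alpha> \<alpha>'"
  then obtain j k where arr: "arrow N T j k" and j: "j \<in> Supp T \<alpha>" and k: "k \<in> Supp T \<alpha>'"
    and mismatch: "k \<in> Supp T \<alpha> \<longleftrightarrow> j \<notin> Supp T \<alpha>'"
    unfolding overlap_arrow_def by blast
  then obtain x a b where jk: "k = {x, a}" "j = {x, b}"
    and tri: "triangle_of N T x a b" and ccw: "ccw_order x a b"
    unfolding arrow_iff_ccw_triangle by blast
  have "\<not> crosses {v1, v2} {x, a}" "\<not> crosses {v1, v2} {x, b}" "\<not> crosses {v1, v2} {a, b}"
    using tri edge_of_not_crosses[OF tr i] unfolding triangle_of_iff by auto
  moreover have "crosses {x, b} {u1, u2}" "crosses {x, a} {u1', u2'}"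
    using j k jk \<alpha> \<alpha>' unfolding Supp_def by auto
  ultimately have "crosses {x, a} {u1, u2} \<longleftrightarrow> crosses {x, b} {u1', u2'}"
    using follows_across_triangle_crossings[OF follows ccw] by blast
  then show False
    using mismatch j k jk \<alpha> \<alpha>' unfolding Supp_def by auto
qed

lemma crosses_ccw_labellingE:
  assumes "crosses {v1, v2} \<alpha>" "\<alpha> = {a, b}"
  obtains u1 u2 where "\<alpha> = {u1, u2}" "ccw_order v1 u1 v2" "ccw_order v2 u2 v1"
proof -
  have "ccw_order v1 a v2 \<and> ccw_order v2 b v1 \<or> ccw_order v1 b v2 \<and> ccw_order v2 a v1"
    using assms crosses_iff_ccw_order by simp
  then show thesis
  proof
    assume "ccw_order v1 a v2 \<and> ccw_order v2 b v1"
    then show thesis using that assms(2) by blast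
  next
    assume "ccw_order v1 b v2 \<and> ccw_order v2 a v1"
    then show thesis using that[of b a] assms(2) by (simp add: insert_commute)
  qed
qed

lemma common_support_imp_follows_across_or_overlap_arrow:
  assumes tr: "triangulation N T" and i: "i \<in> Supp T \<alpha> \<inter> Supp T \<alpha>'"
    and \<alpha>: "is_diag N \<alpha>" and \<alpha>': "is_diag N \<alpha>'"
  shows "(\<exists>v1 v2 u1 u2 u1' u2'. i = {v1, v2} \<and> \<alpha> = {u1, u2} \<and> \<alpha>' = {u1', u2'} \<and>
            follows_across v1 v2 u1 u2 u1' u2') \<or> overlap_arrow N T \<alpha> \<alpha>'"
proof -
  have "i \<in> T" "crosses i \<alpha>" "crosses i \<alpha>'"
    using i unfolding Supp_def by auto
  then obtain v1 v2 where v: "i = {v1, v2}"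
    using triangulation_memE[OF tr] by metis
  obtain a b a' b' where "\<alpha> = {a, b}" "\<alpha>' = {a', b'}"
    using \<alpha> \<alpha>' unfolding is_diag_def by blast
  then obtain u1 u2 u1' u2' where u: "\<alpha> = {u1, u2}" "\<alpha>' = {u1', u2'}"
    and ccw: "ccw_order v1 u1 v2" "ccw_order v2 u2 v1" "ccw_order v1 u1' v2" "ccw_order v2 u2' v1"
    using crosses_ccw_labellingE \<open>crosses i \<alpha>\<close> \<open>crosses i \<alpha>'\<close> v by metis
  show ?thesis
  proof (cases "follows_across v1 v2 u1 u2 u1' u2'")
    case True
    then show ?thesis using v u by blast
  next
    case False
    have "{v1, v2} \<in> T" "{v2, v1} \<in> T"
      using \<open>i \<in> T\<close> v by (auto simp: insert_commute)
    moreover have "\<alpha> = {u2, u1}" "\<alpha>' = {u2', u1'}"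
      using u by (auto simp: insert_commute)
    ultimately have "overlap_arrow N T \<alpha> \<alpha>'"
      using not_follows_across_imp_precedes_on_arc[OF ccw False]
        precedes_on_arc_imp_overlap_arrow[OF tr _ \<alpha> _ \<alpha>'] u
      by blast
    then show ?thesis ..
  qed
qed

lemma common_support_ccw_chain_iff:
  assumes tr: "triangulation N T" and \<alpha>: "is_diag N \<alpha>" and \<alpha>': "is_diag N \<alpha>'"
  shows "(\<exists>i \<in> Supp T \<alpha> \<inter> Supp T \<alpha>'. \<exists>v1 v2 u1 u2 u1' u2'.
            i = {v1, v2} \<and> \<alpha> = {u1, u2} \<and> \<alpha>' = {u1', u2'} \<and> ccw_chain N v1 v2 u1 u2 u1' u2')
     \<longleftrightarrow> Supp T \<alpha> \<inter> Supp T \<alpha>' \<noteq> {} \<and> \<not> overlap_arrow N T \<alpha> \<alpha>'"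
proof -
  have chain_iff: "ccw_chain N v1 v2 u1 u2 u1' u2' \<longleftrightarrow> follows_across v1 v2 u1 u2 u1' u2'"
    if "i \<in> Supp T \<alpha>" "i = {v1, v2}" "\<alpha> = {u1, u2}" "\<alpha>' = {u1', u2'}" for i v1 v2 u1 u2 u1' u2'
    using that \<alpha> \<alpha>' triangulation_diagonal[OF tr] is_diag_iff unfolding Supp_def
    by (intro ccw_chain_iff_follows_across) auto
  show ?thesis
  proof
    assume "\<exists>i \<in> Supp T \<alpha> \<inter> Supp T \<alpha>'. \<exists>v1 v2 u1 u2 u1' u2'.
      i = {v1, v2} \<and> \<alpha> = {u1, u2} \<and> \<alpha>' = {u1', u2'} \<and> ccw_chain N v1 v2 u1 u2 u1' u2'"
    then obtain i v1 v2 u1 u2 u1' u2' where i: "i \<in> Supp T \<alpha> \<inter> Supp T \<alpha>'"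
      and eqs: "i = {v1, v2}" "\<alpha> = {u1, u2}" "\<alpha>' = {u1', u2'}" and "ccw_chain N v1 v2 u1 u2 u1' u2'"
      by blast
    then have "follows_across v1 v2 u1 u2 u1' u2'"
      using chain_iff by blast
    moreover have "{v1, v2} \<in> T"
      using i eqs(1) unfolding Supp_def by blast
    ultimately show "Supp T \<alpha> \<inter> Supp T \<alpha>' \<noteq> {} \<and> \<not> overlap_arrow N T \<alpha> \<alpha>'"
      using follows_across_imp_not_overlap_arrow[OF tr _ eqs(2,3)] i by blast
  next
    assume B: "Supp T \<alpha> \<inter> Supp T \<alpha>' \<noteq> {} \<and> \<not> overlap_arrow N T \<alpha> \<alpha>'"
    then obtain i where i: "i \<in> Supp T \<alpha> \<inter> Supp T \<alpha>'"
      by blast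
    then obtain v1 v2 u1 u2 u1' u2' where eqs: "i = {v1, v2}" "\<alpha> = {u1, u2}" "\<alpha>' = {u1', u2'}"
      and "follows_across v1 v2 u1 u2 u1' u2'"
      using common_support_imp_follows_across_or_overlap_arrow[OF tr i \<alpha> \<alpha>'] B by blast
    then have "ccw_chain N v1 v2 u1 u2 u1' u2'"
      using chain_iff i by blast
    then show "\<exists>i \<in> Supp T \<alpha> \<inter> Supp T \<alpha>'. \<exists>v1 v2 u1 u2 u1' u2'.
      i = {v1, v2} \<and> \<alpha> = {u1, u2} \<and> \<alpha>' = {u1', u2'} \<and> ccw_chain N v1 v2 u1 u2 u1' u2'"
      using i eqs by blast
  qed
qed

theorem mainTheorem13:
  fixes n :: nat and T :: "nat set set" and \<alpha> \<alpha>' :: "nat set"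
  assumes "triangulation (n + 3) T"
    and "positive_root (n + 3) T \<alpha>" and "positive_root (n + 3) T \<alpha>'"
  shows "(\<exists>i \<in> Supp T \<alpha> \<inter> Supp T \<alpha>'. \<exists>v1 v2 u1 u2 u1' u2'.
            i = {v1, v2} \<and> \<alpha> = {u1, u2} \<and> \<alpha>' = {u1', u2'} \<and>
            ccw_pos (n + 3) v1 v1 < ccw_pos (n + 3) v1 u1 \<and>
            ccw_pos (n + 3) v1 u1 \<le> ccw_pos (n + 3) v1 u1' \<and>
            ccw_pos (n + 3) v1 u1' < ccw_pos (n + 3) v1 v2 \<and>
            ccw_pos (n + 3) v1 v2 < ccw_pos (n + 3) v1 u2 \<and>
            ccw_pos (n + 3) v1 u2 \<le> ccw_pos (n + 3) v1 u2')
     \<longleftrightarrow>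
         (Supp T \<alpha> \<inter> Supp T \<alpha>' \<noteq> {} \<and>
          \<not> (\<exists>j \<in> Supp T \<alpha> - Supp T \<alpha>'. \<exists>i \<in> Supp T \<alpha> \<inter> Supp T \<alpha>'. arrow (n + 3) T j i) \<and>
          \<not> (\<exists>j \<in> Supp T \<alpha> \<inter> Supp T \<alpha>'. \<exists>i \<in> Supp T \<alpha>' - Supp T \<alpha>. arrow (n + 3) T j i))"
  using common_support_ccw_chain_iff[of "n + 3" T \<alpha> \<alpha>'] assms
  unfolding positive_root_def overlap_arrow_def by simp

end
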